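(* Let $n=2t$, and let $\varphi:\mathbb{F}_{2^t}\times\mathbb{F}_{2^t}\to\mathbb{F}_{2^n}$ be an $\mathbb{F}_2$-linear bijection. Let $Q(x)=\sum_{i=1}^{t-1}Tr_1^n(x^{2^i+1})+Tr_1^{t}(x^{2^{t}+1})$ on $\mathbb{F}_{2^n}$ and $\tilde Q=Q\circ\varphi$. Let $G(x,y)=Tr_1^t(xy)$ on $\mathbb{F}_{2^t}\times\mathbb{F}_{2^t}$, and suppose $\alpha_1,\alpha_2,\alpha_3,\alpha_4,\beta,\gamma\in\mathbb{F}_{2^t}$ and $c\in\mathbb{F}_2$ satisfy $\tilde Q(x,y)=G(\alpha_1x+\alpha_2,\alpha_3y+\alpha_4)+Tr_1^t(\beta x)+Tr_1^t(\gamma y)+c$ for all $x,y$. Let $\pi$ be a complete mapping polynomial over $\mathbb{F}_{2^t}$, $h$ any polynomial over $\mathbb{F}_{2^t}$, and $f(x,y)=Tr_1^t(x\pi(y))+Tr_1^t(h(y))$. Then $$F(x,y)=f(\alpha_1x+\alpha_2,\alpha_3y+\alpha_4)+G(\alpha_1x+\alpha_2,\alpha_3y+\alpha_4)+Tr_1^t(\beta x)+Tr_1^t(\gamma y)+c$$ is bent-negabent, in the sense that $F\circ\varphi^{-1}:\mathbb{F}_{2^n}\to\mathbb{F}_2$ is bent-negabent.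
   Context: $Tr_1^m(z)=z+z^2+\dots+z^{2^{m-1}}$; $Tr=Tr_1^n$. A polynomial $\pi$ over $\mathbb{F}_{2^t}$ is a complete mapping polynomial if both $\pi(y)$ and $\pi(y)+y$ are permutations of $\mathbb{F}_{2^t}$. Fix a self-dual basis $\{\alpha_i'\}$ of $\mathbb{F}_{2^n}$ over $\mathbb{F}_2$ ($Tr(\alpha_i'\alpha_j')=\delta_{ij}$), identify $\mathbb{F}_{2^n}$ with $\mathbb{F}_2^n$ via coordinates, and let $wt(x)$ be the number of nonzero coordinates. For $g:\mathbb{F}_{2^n}\to\mathbb{F}_2$: $g$ is bent if $\left|\sum_x(-1)^{g(x)+Tr(\mu x)}\right|=2^{n/2}$ for all $\mu$; negabent if $\left|\sum_x(-1)^{g(x)+Tr(\mu x)}\mathrm{i}^{wt(x)}\right|=2^{n/2}$ for all $\mu$ ($\mathrm{i}=\sqrt{-1}$); bent-negabent if both. *)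

theory Defs
  imports "HOL-Analysis.Analysis" "HOL-Library.Z2" "HOL-Computational_Algebra.Polynomial"
begin

definition tr :: "nat \<Rightarrow> 'a::field \<Rightarrow> 'a" where
  "tr m z = (\<Sum>i<m. z ^ (2 ^ i))"

text \<open>Identify an element of the prime field {0,1} of a field with an element of F_2.\<close>
definition to_bit :: "'a::field \<Rightarrow> bit" where
  "to_bit z = (if z = 0 then 0 else 1)"

definition chi :: "bit \<Rightarrow> complex" where
  "chi b = (if b = 0 then 1 else -1)"

definition self_dual_basis :: "nat \<Rightarrow> (nat \<Rightarrow> 'a::field) \<Rightarrow> bool" where
  "self_dual_basis n a \<longleftrightarrow>
     (\<forall>i<n. \<forall>j<n. tr n (a i * a j) = (if i = j then 1 else 0))"

text \<open>Hamming weight of the coordinate vector w.r.t. the self-dual basis;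
  the i-th coordinate of x is Tr(a_i x).\<close>
definition wt :: "nat \<Rightarrow> (nat \<Rightarrow> 'a::field) \<Rightarrow> 'a \<Rightarrow> nat" where
  "wt n a x = card {i. i < n \<and> tr n (a i * x) \<noteq> 0}"

definition bent :: "nat \<Rightarrow> ('a::{field,finite} \<Rightarrow> bit) \<Rightarrow> bool" where
  "bent n g \<longleftrightarrow>
     (\<forall>\<mu>::'a. cmod (\<Sum>x\<in>UNIV. chi (g x + to_bit (tr n (\<mu> * x)))) = 2 powr (real n / 2))"

definition negabent :: "nat \<Rightarrow> (nat \<Rightarrow> 'a::{field,finite}) \<Rightarrow> ('a \<Rightarrow> bit) \<Rightarrow> bool" where
  "negabent n a g \<longleftrightarrow>
     (\<forall>\<mu>::'a. cmod (\<Sum>x\<in>UNIV. chi (g x + to_bit (tr n (\<mu> * x))) * \<i> ^ wt n a x)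
               = 2 powr (real n / 2))"

definition bent_negabent :: "nat \<Rightarrow> (nat \<Rightarrow> 'a::{field,finite}) \<Rightarrow> ('a \<Rightarrow> bit) \<Rightarrow> bool" where
  "bent_negabent n a g \<longleftrightarrow> bent n g \<and> negabent n a g"

definition complete_mapping :: "'b::field poly \<Rightarrow> bool" where
  "complete_mapping p \<longleftrightarrow> bij (poly p) \<and> bij (\<lambda>y. poly p y + y)"

end

theory Submission
  imports Defs
begin

text \<open>Write \<open>e(u) = (-1) ^ Tr(u)\<close>. Both transforms of \<open>F \<circ> \<phi>\<inverse>\<close> reduce to
  Maiorana--McFarland sums \<open>\<Sum>x y. e((\<alpha>1 x + \<alpha>2) P(\<alpha>3 y + \<alpha>4)) e(H(\<alpha>3 y + \<alpha>4)) \<rho>(x, y)\<close>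
  with \<open>\<rho>\<close> a \<open>\<plusminus>1\<close>-valued additive character; these equal \<open>\<plusminus>2 ^ t\<close> when \<open>P\<close> is a
  permutation and \<open>\<alpha>1 \<alpha>3 \<noteq> 0\<close>, because the sum over \<open>x\<close> kills all but one \<open>y\<close>.
  In the Walsh transform the quadratic part \<open>Q \<circ> \<phi>\<close> is absorbed into \<open>P = \<pi> + id\<close>.
  For the nega-Hadamard transform, in a self-dual basis \<open>\<i> ^ wt(z) (-1) ^ Q(z) (-\<i>) ^ Tr(z)\<close>
  is an additive character, as the polar forms of \<open>wt\<close>, \<open>Q\<close> and \<open>Tr\<close> cancel; so the
  transform is \<open>(1 + \<i>)/2 S1 + (1 - \<i>)/2 S2\<close> for two such sums with \<open>P = \<pi>\<close>, of modulus
  \<open>2 ^ t\<close>. Finally \<open>\<alpha>1 \<alpha>3 \<noteq> 0\<close> because \<open>Q\<close> is not affine.\<close>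

section \<open>Finite fields of characteristic 2 and the trace\<close>

lemma finite_field_power_card:
  fixes x :: "'k::{field,finite}"
  shows "x ^ CARD('k) = x"
proof (cases "x = 0")
  case False
  have "x * (\<Prod>y\<in>UNIV-{0}. x * y) = x * x ^ (CARD('k) - 1) * \<Prod>(UNIV-{0::'k})"
    by (simp add: prod.distrib mult_ac)
  also have "x * x ^ (CARD('k) - 1) = x ^ Suc (CARD('k) - 1)"
    by (subst power_Suc) auto
  also have "Suc (CARD('k) - 1) = CARD('k)"
    using finite_UNIV_card_ge_0[where ?'a = 'k] by simp
  also have "(\<Prod>y\<in>UNIV-{0}. x * y) = (\<Prod>y\<in>UNIV-{0::'k}. y)"
    by (rule prod.reindex_bij_witness[of _ "\<lambda>y. y / x" "\<lambda>y. x * y"]) (use False in auto)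
  finally show ?thesis
    by simp
qed (use finite_UNIV_card_ge_0[where ?'a = 'k] in auto)

lemma card_finite_field_ge_2: "CARD('k::{field,finite}) \<ge> 2"
  using card_mono[of UNIV "{0::'k, 1}"] by simp

lemma finite_field_char_2:
  assumes "CARD('k::{field,finite}) = 2 ^ m"
  shows "(2::'k) = 0"
proof -
  have "m > 0"
    using card_finite_field_ge_2[where 'k='k] assms by (cases m) auto
  then have "(-1::'k) ^ CARD('k) = 1"
    using assms by (simp add: power_minus1_even)
  then have "(-1::'k) = 1"
    using finite_field_power_card[of "-1::'k"] by simp
  then show ?thesis
    by (metis add.right_inverse one_add_one)
qed

lemma char_2_add_self: "(2::'k::comm_ring_1) = 0 \<Longrightarrow> x + x = (0::'k)"
  by (metis mult_2 mult_zero_left)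

lemma char_2_uminus: "(2::'k::comm_ring_1) = 0 \<Longrightarrow> - x = (x::'k)"
  by (metis add_eq_0_iff2 char_2_add_self)

lemma char_2_diff: "(2::'k::comm_ring_1) = 0 \<Longrightarrow> x - y = (x::'k) + y"
  by (simp add: char_2_uminus)

lemma char_2_power2_add:
  "(2::'k::comm_ring_1) = 0 \<Longrightarrow> (x + y) ^ 2 = x ^ 2 + (y::'k) ^ 2"
  by (simp add: power2_sum)

lemma char_2_power_two_power_add:
  assumes "(2::'k::comm_ring_1) = 0"
  shows "(x + y) ^ (2 ^ i) = x ^ (2 ^ i) + (y::'k) ^ (2 ^ i)"
proof (induction i)
  case (Suc i)
  then show ?case
    using char_2_power2_add[OF assms] by (simp add: power_mult mult.commute[of 2])
qed simp

lemma char_2_sum_power2: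
  "(2::'k::comm_ring_1) = 0 \<Longrightarrow> (\<Sum>i\<in>A. f i :: 'k) ^ 2 = (\<Sum>i\<in>A. (f i) ^ 2)"
  by (induction A rule: infinite_finite_induct) (auto simp: char_2_power2_add)

lemma idempotent_power_two_power: "(c::'k::comm_ring_1) ^ 2 = c \<Longrightarrow> c ^ (2 ^ i) = c"
  by (induction i) (simp_all add: power_mult mult.commute[of 2])

lemma idempotent_cases: "(u::'k::field) ^ 2 = u \<Longrightarrow> u = 0 \<or> u = 1"
  by (metis power2_eq_square mult_cancel_right1 mult_eq_0_iff)

lemma tr_0 [simp]: "tr k 0 = 0"
  by (simp add: tr_def zero_power)

lemma tr_add: "(2::'k::field) = 0 \<Longrightarrow> tr k (x + y) = tr k x + tr k (y::'k)"
  by (simp add: tr_def char_2_power_two_power_add sum.distrib)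

lemma tr_sum:
  "(2::'k::field) = 0 \<Longrightarrow> tr k (\<Sum>i\<in>A. f i :: 'k) = (\<Sum>i\<in>A. tr k (f i))"
  by (induction A rule: infinite_finite_induct) (auto simp: tr_add)

lemma tr_mult_idempotent: "(c::'k::field) ^ 2 = c \<Longrightarrow> tr k (c * x) = c * tr k x"
  by (simp add: tr_def power_mult_distrib idempotent_power_two_power sum_distrib_left)

lemma tr_power2_eq:
  assumes "(w::'k::field) ^ (2 ^ k) = w"
  shows "tr k (w ^ 2) = tr k w"
proof -
  have "tr k (w ^ 2) + w = (\<Sum>i<Suc k. w ^ (2 ^ i))"
    unfolding tr_def sum.lessThan_Suc_shift by (simp add: power_mult[symmetric] mult.commute)
  also have "\<dots> = tr k w + w"
    using assms by (simp add: tr_def)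
  finally show ?thesis
    by simp
qed

lemma tr_power2_idempotent:
  assumes "(2::'k::field) = 0" and "(w::'k) ^ (2 ^ k) = w"
  shows "(tr k w) ^ 2 = tr k w"
proof -
  have "(tr k w) ^ 2 = tr k (w ^ 2)"
    unfolding tr_def char_2_sum_power2[OF assms(1)] by (simp add: power_mult[symmetric] mult.commute)
  then show ?thesis
    using tr_power2_eq[OF assms(2)] by simp
qed

lemma finite_field_power_two_power:
  "CARD('k::{field,finite}) = 2 ^ m \<Longrightarrow> (x::'k) ^ (2 ^ m) = x"
  using finite_field_power_card[of x] by simp

lemma tr_power_two_power:
  assumes "CARD('k::{field,finite}) = 2 ^ m"
  shows "tr m ((w::'k) ^ (2 ^ i)) = tr m w"
proof (induction i)
  case (Suc i)
  have "w ^ (2 ^ Suc i) = (w ^ (2 ^ i)) ^ 2"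
    by (simp add: power_mult[symmetric] mult.commute)
  then show ?case
    using Suc tr_power2_eq[OF finite_field_power_two_power[OF assms]] by simp
qed simp

lemma tr_idempotent:
  "CARD('k::{field,finite}) = 2 ^ m \<Longrightarrow> (tr m (w::'k)) ^ 2 = tr m w"
  using tr_power2_idempotent[OF finite_field_char_2 finite_field_power_two_power] .

lemma tr_cases: "CARD('k::{field,finite}) = 2 ^ m \<Longrightarrow> tr m (w::'k) = 0 \<or> tr m w = 1"
  using idempotent_cases[OF tr_idempotent] .

text \<open>The trace is a nonzero map because, as a polynomial, its degree \<open>2 ^ (m - 1)\<close> is
  smaller than the number of elements.\<close>
lemma tr_not_identically_zero:
  assumes "CARD('k::{field,finite}) = 2 ^ m"
  shows "\<exists>x::'k. tr m x \<noteq> 0"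
proof (rule ccontr)
  assume H: "\<not> (\<exists>x::'k. tr m x \<noteq> 0)"
  have m: "m > 0"
    using card_finite_field_ge_2[where 'k='k] assms by (cases m) auto
  define p :: "'k poly" where "p = (\<Sum>i<m. monom 1 (2 ^ i))"
  have "coeff p (2 ^ (m - 1)) = (\<Sum>i<m. if i = m - 1 then 1 else 0)"
    unfolding p_def coeff_sum by (intro sum.cong) (auto simp: coeff_monom)
  also have "\<dots> = 1"
    using m by simp
  finally have "p \<noteq> 0"
    by auto
  have "degree p \<le> 2 ^ (m - 1)"
    unfolding p_def
  proof (rule degree_sum_le)
    fix i assume "i \<in> {..<m}"
    then have "2 ^ i \<le> (2::nat) ^ (m - 1)"
      by (intro power_increasing) auto
    then show "degree (monom (1::'k) (2 ^ i)) \<le> 2 ^ (m - 1)"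
      by (simp add: degree_monom_eq)
  qed simp
  moreover have "{x. poly p x = 0} = UNIV"
    using H by (auto simp: p_def tr_def poly_sum poly_monom)
  then have "CARD('k) \<le> degree p"
    using card_poly_roots_bound[OF \<open>p \<noteq> 0\<close>] by simp
  moreover have "(2::nat) ^ (m - 1) < 2 ^ m"
    using m by simp
  ultimately show False
    using assms by linarith
qed

section \<open>Additive characters\<close>

definition additive_char :: "('x::plus \<Rightarrow> complex) \<Rightarrow> bool" where
  "additive_char \<psi> \<longleftrightarrow> (\<forall>x y. \<psi> (x + y) = \<psi> x * \<psi> y)"

definition sign_valued :: "('x \<Rightarrow> complex) \<Rightarrow> bool" where
  "sign_valued f \<longleftrightarrow> (\<forall>x. f x = 1 \<or> f x = -1)"

lemma additive_char_comp:
  "additive_char \<psi> \<Longrightarrow> (\<And>x y. L (x + y) = L x + L y) \<Longrightarrow> additive_char (\<lambda>x. \<psi> (L x))"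
  by (simp add: additive_char_def)

lemma additive_char_mult:
  "additive_char f \<Longrightarrow> additive_char g \<Longrightarrow> additive_char (\<lambda>x. f x * g x)"
  by (simp add: additive_char_def mult_ac)

lemma sign_valued_mult:
  "sign_valued f \<Longrightarrow> sign_valued g \<Longrightarrow> sign_valued (\<lambda>x. f x * g x)"
  unfolding sign_valued_def by (metis mult_1 mult_minus1 minus_minus mult.commute)

lemma additive_char_0:
  "additive_char f \<Longrightarrow> sign_valued f \<Longrightarrow> f (0::'x::monoid_add) = 1"
  unfolding additive_char_def sign_valued_def by (metis add_0 mult_1 mult_minus1 minus_minus)

lemma additive_char_sum_eq_0:
  fixes \<psi> :: "'x::{ab_group_add,finite} \<Rightarrow> complex"
  assumes "additive_char \<psi>" and "\<psi> x0 \<noteq> 1"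
  shows "(\<Sum>x\<in>UNIV. \<psi> x) = 0"
proof -
  have "(\<Sum>x\<in>UNIV. \<psi> x) = (\<Sum>x\<in>UNIV. \<psi> (x + x0))"
    by (rule sum.reindex_bij_witness[of _ "\<lambda>x. x + x0" "\<lambda>x. x - x0"]) auto
  also have "\<dots> = \<psi> x0 * (\<Sum>x\<in>UNIV. \<psi> x)"
    using assms(1) by (simp add: additive_char_def sum_distrib_left mult.commute)
  finally have "(1 - \<psi> x0) * (\<Sum>x\<in>UNIV. \<psi> x) = 0"
    by (simp add: algebra_simps)
  then show ?thesis
    using assms(2) by simp
qed

lemma chi_add: "chi (b + c) = chi b * chi c"
  by (cases b; cases c) (simp_all add: chi_def)

lemma chi_mult_self [simp]: "chi b * chi b = 1"
  by (cases b) (simp_all add: chi_def)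

lemma chi_cases: "chi b = 1 \<or> chi b = -1"
  by (cases b) (simp_all add: chi_def)

lemma to_bit_add:
  assumes "(2::'k::field) = 0" and "u ^ 2 = u" and "v ^ 2 = (v::'k)"
  shows "to_bit (u + v) = to_bit u + to_bit v"
  using idempotent_cases[OF assms(2)] idempotent_cases[OF assms(3)] assms(1)
  by (auto simp: to_bit_def)

definition tr_char :: "nat \<Rightarrow> 'k::field \<Rightarrow> complex" where
  "tr_char m x = chi (to_bit (tr m x))"

lemma tr_char_0 [simp]: "tr_char m 0 = 1"
  by (simp add: tr_char_def to_bit_def chi_def)

lemma tr_char_mult_self [simp]: "tr_char m x * tr_char m x = 1"
  by (simp add: tr_char_def)

lemma sign_valued_tr_char: "sign_valued (\<lambda>x. tr_char m (f x))"
  using chi_cases by (simp add: sign_valued_def tr_char_def)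

lemma tr_char_add:
  assumes "CARD('k::{field,finite}) = 2 ^ m"
  shows "tr_char m ((x::'k) + y) = tr_char m x * tr_char m y"
  unfolding tr_char_def tr_add[OF finite_field_char_2[OF assms]] chi_add[symmetric]
  using to_bit_add[OF finite_field_char_2[OF assms] tr_idempotent[OF assms] tr_idempotent[OF assms]]
  by simp

lemma additive_char_tr_char_linear:
  assumes "CARD('k::{field,finite}) = 2 ^ m" and "\<And>x y. L (x + y) = L x + (L y::'k)"
  shows "additive_char (\<lambda>x. tr_char m (L x))"
  using assms by (simp add: additive_char_def tr_char_add)

lemma sum_tr_char:
  assumes "CARD('k::{field,finite}) = 2 ^ m"
  shows "(\<Sum>y\<in>UNIV. tr_char m ((x::'k) * y)) = (if x = 0 then of_nat CARD('k) else 0)"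
proof (cases "x = 0")
  case False
  obtain y :: 'k where "tr m y \<noteq> 0"
    using tr_not_identically_zero[OF assms] by blast
  then have "tr_char m (x * (y / x)) \<noteq> 1"
    using False by (simp add: tr_char_def to_bit_def chi_def)
  moreover have "additive_char (\<lambda>z. tr_char m (x * z))"
    using assms by (intro additive_char_tr_char_linear) (simp_all add: distrib_left)
  ultimately show ?thesis
    using False additive_char_sum_eq_0[of "\<lambda>z. tr_char m (x * z)" "y / x"] by simp
qed simp

text \<open>Every \<open>\<plusminus>1\<close>-valued additive character is \<open>x \<mapsto> (-1) ^ Tr(l x)\<close> for some \<open>l\<close>: the
  orthogonality relations show that \<open>\<rho>\<close> correlates with one of these characters, and two
  distinct characters never correlate.\<close>
lemma additive_char_eq_tr_char:
  fixes \<rho> :: "'k::{field,finite} \<Rightarrow> complex"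
  assumes card: "CARD('k) = 2 ^ m" and "additive_char \<rho>" and "sign_valued \<rho>"
  obtains l where "\<And>x. \<rho> x = tr_char m (l * x)"
proof -
  have "(\<Sum>l\<in>UNIV. \<Sum>x\<in>UNIV. \<rho> x * tr_char m (l * x))
      = (\<Sum>x\<in>UNIV. \<rho> x * (\<Sum>l\<in>UNIV. tr_char m (x * l)))"
    by (subst sum.swap) (simp add: sum_distrib_left mult.commute[of "_::'k"])
  also have "\<dots> = (\<Sum>x::'k\<in>UNIV. if x = 0 then \<rho> 0 * of_nat CARD('k) else 0)"
    by (simp add: sum_tr_char[OF card] if_distrib cong: if_cong)
  also have "\<dots> = of_nat CARD('k)"
    using additive_char_0[OF assms(2,3)] by simp
  finally have "(\<Sum>l\<in>UNIV. \<Sum>x\<in>UNIV. \<rho> x * tr_char m (l * x)) \<noteq> 0"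
    by simp
  then obtain l where l: "(\<Sum>x\<in>UNIV. \<rho> x * tr_char m (l * x)) \<noteq> 0"
    by (meson sum.neutral)
  have "additive_char (\<lambda>x. \<rho> x * tr_char m (l * x))"
    using assms(2) additive_char_tr_char_linear[OF card, of "(*) l"]
    by (intro additive_char_mult) (simp_all add: distrib_left)
  then have "\<rho> x * tr_char m (l * x) = 1" for x
    using additive_char_sum_eq_0 l by blast
  then have "\<rho> x = tr_char m (l * x)" for x
    using tr_char_mult_self[of m "l * x"] by (metis mult.assoc mult_1_right)
  then show ?thesis
    using that by blast
qed

section \<open>Maiorana--McFarland sums\<close>

lemma sum_UNIV_reindex_bij: "bij h \<Longrightarrow> (\<Sum>z\<in>UNIV. g z) = (\<Sum>p\<in>UNIV. g (h p))"
  by (rule sum.reindex_bij_betw[symmetric]) (simp add: bij_def bij_betw_def)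

lemma sum_UNIV_prod_swap:
  "(\<Sum>p\<in>UNIV. g p) = (\<Sum>y\<in>UNIV. \<Sum>x\<in>UNIV. g (x, y) :: 'c::comm_monoid_add)"
proof -
  have "(\<Sum>p\<in>UNIV. g p) = (\<Sum>x\<in>UNIV. \<Sum>y\<in>UNIV. g (x, y))"
    using sum.cartesian_product'[of g UNIV UNIV] by simp
  also have "\<dots> = (\<Sum>y\<in>UNIV. \<Sum>x\<in>UNIV. g (x, y))"
    by (rule sum.swap)
  finally show ?thesis .
qed

text \<open>For fixed \<open>y\<close> the sum over \<open>x\<close> vanishes unless \<open>C y\<close> cancels the \<open>x\<close>-part of \<open>\<rho>\<close>,
  which happens for exactly one \<open>y\<close>.\<close>
lemma maiorana_mcfarland_sum:
  fixes C :: "'b::{field,finite} \<Rightarrow> 'b" and K :: "'b \<Rightarrow> complex" and \<rho> :: "'b \<times> 'b \<Rightarrow> complex"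
  assumes card: "CARD('b) = 2 ^ t" and "bij C" and "sign_valued K"
    and \<rho>: "additive_char \<rho>" "sign_valued \<rho>"
  shows "(\<Sum>p\<in>UNIV. tr_char t (fst p * C (snd p)) * K (snd p) * \<rho> p)
           \<in> {of_nat CARD('b), - of_nat CARD('b)}"
proof -
  have "additive_char (\<lambda>x. \<rho> (x, 0))"
    using additive_char_comp[OF \<rho>(1), of "\<lambda>x. (x, 0)"] by simp
  moreover have "sign_valued (\<lambda>x. \<rho> (x, 0))"
    using \<rho>(2) by (simp add: sign_valued_def)
  ultimately obtain l where l: "\<And>x. \<rho> (x, 0) = tr_char t (l * x)"
    using additive_char_eq_tr_char[OF card] by blast
  have \<rho>_split: "\<rho> (x, y) = tr_char t (l * x) * \<rho> (0, y)" for x y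
  proof -
    have "\<rho> ((x, 0) + (0, y)) = \<rho> (x, 0) * \<rho> (0, y)"
      using \<rho>(1) by (simp only: additive_char_def)
    then show ?thesis
      by (simp add: l)
  qed
  define y0 where "y0 = inv C (- l)"
  have y0: "C y + l = 0 \<longleftrightarrow> y = y0" for y
    unfolding y0_def using bij_inv_eq_iff[OF \<open>bij C\<close>] eq_neg_iff_add_eq_0[of "C y" l] by auto
  have summand:
    "tr_char t (x * C y) * K y * \<rho> (x, y) = tr_char t ((C y + l) * x) * (K y * \<rho> (0, y))"
    for x y
  proof -
    have "(C y + l) * x = x * C y + l * x"
      by (simp add: algebra_simps)
    then have "tr_char t ((C y + l) * x) = tr_char t (x * C y) * tr_char t (l * x)"
      by (simp only: tr_char_add[OF card])
    then show ?thesis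
      unfolding \<rho>_split[of x y] by (simp only: mult_ac)
  qed
  then have "(\<Sum>p\<in>UNIV. tr_char t (fst p * C (snd p)) * K (snd p) * \<rho> p)
      = (\<Sum>y\<in>UNIV. (\<Sum>x\<in>UNIV. tr_char t ((C y + l) * x)) * (K y * \<rho> (0, y)))"
    unfolding sum_UNIV_prod_swap sum_distrib_right by (simp only: fst_conv snd_conv summand)
  also have "\<dots> = (\<Sum>y\<in>UNIV. (if y = y0 then of_nat CARD('b) else 0) * (K y * \<rho> (0, y)))"
    by (simp add: sum_tr_char[OF card] y0)
  also have "\<dots> = of_nat CARD('b) * (K y0 * \<rho> (0, y0))"
    by (simp add: if_distrib[of "\<lambda>z. z * _"] cong: if_cong)
  finally show ?thesis
    using sign_valued_mult[OF \<open>sign_valued K\<close>, of "\<lambda>y. \<rho> (0, y)"] \<rho>(2)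
    by (auto simp: sign_valued_def)
qed

lemma bij_affine: "(a::'k::field) \<noteq> 0 \<Longrightarrow> bij (\<lambda>y. a * y + b)"
  by (rule bij_betwI'[where ?Y = UNIV]) (auto intro!: exI[of _ "(_ - b) / a"])

corollary maiorana_mcfarland_sum_affine:
  fixes P H :: "'b::{field,finite} \<Rightarrow> 'b" and \<rho> :: "'b \<times> 'b \<Rightarrow> complex"
  assumes card: "CARD('b) = 2 ^ t" and "bij P" and "a1 \<noteq> 0" and "a3 \<noteq> 0"
    and \<rho>: "additive_char \<rho>" "sign_valued \<rho>"
  shows "(\<Sum>p\<in>UNIV. tr_char t ((a1 * fst p + a2) * P (a3 * snd p + a4))
            * tr_char t (H (a3 * snd p + a4)) * \<rho> p) \<in> {of_nat CARD('b), - of_nat CARD('b)}"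
proof -
  define C where "C y = a1 * P (a3 * y + a4)" for y
  define K where "K y = tr_char t (a2 * P (a3 * y + a4)) * tr_char t (H (a3 * y + a4))" for y
  have "C = (\<lambda>z. a1 * z + 0) \<circ> P \<circ> (\<lambda>y. a3 * y + a4)"
    by (auto simp: C_def)
  moreover have "bij (\<lambda>z. a1 * z + 0)" and "bij (\<lambda>y. a3 * y + a4)"
    using bij_affine \<open>a1 \<noteq> 0\<close> \<open>a3 \<noteq> 0\<close> by blast+
  ultimately have "bij C"
    using \<open>bij P\<close> by (simp only: bij_comp)
  moreover have "sign_valued K"
    unfolding K_def by (intro sign_valued_mult sign_valued_tr_char)
  moreover have "tr_char t ((a1 * x + a2) * P (a3 * y + a4)) * tr_char t (H (a3 * y + a4))
      = tr_char t (x * C y) * K y" for x y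
    by (simp add: C_def K_def algebra_simps tr_char_add[OF card])
  ultimately show ?thesis
    using maiorana_mcfarland_sum[OF card _ _ \<rho>] by simp
qed

section \<open>The quadratic form\<close>

definition quad_tr :: "nat \<Rightarrow> 'a::field \<Rightarrow> 'a" where
  "quad_tr t z = (\<Sum>i\<in>{1..t-1}. tr (2 * t) (z ^ (2 ^ i + 1))) + tr t (z ^ (2 ^ t + 1))"

lemma char_2_power_two_power_plus_1_add:
  assumes "(2::'k::comm_ring_1) = 0"
  shows "(x + y) ^ (2 ^ i + 1) = x ^ (2 ^ i + 1) + y ^ (2 ^ i + 1) + (x ^ (2 ^ i) * y + x * (y::'k) ^ (2 ^ i))"
  by (simp add: power_add char_2_power_two_power_add[OF assms] algebra_simps)

lemma tr_mult_power_two_power: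
  assumes "CARD('k::{field,finite}) = 2 ^ n" and "i \<le> n"
  shows "tr n ((x::'k) * y ^ (2 ^ i)) = tr n (x ^ (2 ^ (n - i)) * y)"
proof -
  have "(x ^ (2 ^ (n - i)) * y) ^ (2 ^ i) = x ^ (2 ^ (n - i) * 2 ^ i) * y ^ (2 ^ i)"
    by (simp add: power_mult_distrib power_mult)
  also have "2 ^ (n - i) * 2 ^ i = (2::nat) ^ n"
    using assms(2) by (simp flip: power_add)
  finally show ?thesis
    using tr_power_two_power[OF assms(1), of "x ^ (2 ^ (n - i)) * y" i]
    by (simp add: finite_field_power_two_power[OF assms(1)])
qed

lemma sum_lessThan_add:
  fixes m k :: nat
  shows "(\<Sum>i<m + k. f i) = (\<Sum>i<m. f i) + (\<Sum>i<k. f (m + i) :: 'c::comm_monoid_add)"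
  by (induction k) (simp_all add: add.assoc)

lemma tr_double: "tr (2 * t) (w::'k::field) = tr t w + tr t (w ^ (2 ^ t))"
proof -
  have "tr (2 * t) w = tr t w + (\<Sum>i<t. w ^ (2 ^ (t + i)))"
    unfolding tr_def mult_2 sum_lessThan_add ..
  also have "(\<Sum>i<t. w ^ (2 ^ (t + i))) = tr t (w ^ (2 ^ t))"
    unfolding tr_def by (simp add: power_add power_mult)
  finally show ?thesis .
qed

lemma tr_half_cross_terms:
  assumes "CARD('k::{field,finite}) = 2 ^ (2 * t)"
  shows "tr t ((x::'k) ^ (2 ^ t) * y) + tr t (x * y ^ (2 ^ t)) = tr (2 * t) (x ^ (2 ^ t) * y)"
proof -
  have "(x ^ (2 ^ t) * y) ^ (2 ^ t) = x ^ (2 ^ (2 * t)) * y ^ (2 ^ t)"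
    by (simp add: power_mult_distrib power_mult[symmetric] mult_2 power_add)
  then show ?thesis
    using tr_double[of t "x ^ (2 ^ t) * y"] by (simp add: finite_field_power_two_power[OF assms])
qed

lemma sum_split_at_middle:
  fixes f :: "nat \<Rightarrow> 'c::comm_monoid_add"
  assumes "t \<ge> 1"
  shows "(\<Sum>i\<in>{1..t-1}. f i) + (\<Sum>i\<in>{1..t-1}. f (2 * t - i)) + f t = (\<Sum>j\<in>{1..2*t-1}. f j)"
proof -
  have "(\<Sum>i\<in>{1..t-1}. f (2 * t - i)) = (\<Sum>j\<in>{t+1..2*t-1}. f j)"
    by (rule sum.reindex_bij_witness[of _ "\<lambda>j. 2 * t - j" "\<lambda>i. 2 * t - i"]) auto
  moreover have "{1..2*t-1} = {1..t-1} \<union> ({t} \<union> {t+1..2*t-1})"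
    using assms by auto
  moreover have "(\<Sum>j\<in>{1..t-1} \<union> ({t} \<union> {t+1..2*t-1}). f j)
      = (\<Sum>j\<in>{1..t-1}. f j) + (f t + (\<Sum>j\<in>{t+1..2*t-1}. f j))"
    by (subst sum.union_disjoint; auto)+
  ultimately show ?thesis
    by (simp add: add_ac)
qed

lemma sum_power_two_power_eq_tr_minus:
  assumes "n \<ge> 1"
  shows "(\<Sum>j\<in>{1..n-1}. (x::'k::field) ^ (2 ^ j)) = tr n x - x"
proof -
  have "{..<n} = insert 0 {1..n-1}"
    using assms by auto
  then show ?thesis
    unfolding tr_def by simp
qed

text \<open>The polar form of \<open>quad_tr\<close>: the cross terms of the \<open>t - 1\<close> full traces and of the
  half trace together make up \<open>\<Sum>j=1..2t-1. Tr(x ^ 2 ^ j * y) = Tr((Tr(x) - x) * y)\<close>.\<close>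
lemma quad_tr_add:
  assumes card: "CARD('k::{field,finite}) = 2 ^ (2 * t)"
  shows "quad_tr t ((x::'k) + y)
    = quad_tr t x + quad_tr t y + tr (2 * t) x * tr (2 * t) y + tr (2 * t) (x * y)"
proof -
  let ?n = "2 * t"
  note char_2 = finite_field_char_2[OF card]
  have t: "t \<ge> 1"
    using card_finite_field_ge_2[where 'k='k] card by (cases t) auto
  define S where "S f = (\<Sum>i\<in>{1..t-1}. f i)" for f :: "nat \<Rightarrow> 'k"
  have full: "(\<Sum>i\<in>{1..t-1}. tr ?n ((x + y) ^ (2 ^ i + 1))) =
      S (\<lambda>i. tr ?n (x ^ (2 ^ i + 1))) + S (\<lambda>i. tr ?n (y ^ (2 ^ i + 1)))
      + (S (\<lambda>i. tr ?n (x ^ (2 ^ i) * y)) + S (\<lambda>i. tr ?n (x ^ (2 ^ (?n - i)) * y)))"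
    unfolding S_def sum.distrib[symmetric]
  proof (intro sum.cong refl)
    fix i assume "i \<in> {1..t-1}"
    then have "i \<le> ?n"
      by auto
    then show "tr ?n ((x + y) ^ (2 ^ i + 1)) = tr ?n (x ^ (2 ^ i + 1)) + tr ?n (y ^ (2 ^ i + 1))
        + (tr ?n (x ^ (2 ^ i) * y) + tr ?n (x ^ (2 ^ (?n - i)) * y))"
      unfolding char_2_power_two_power_plus_1_add[OF char_2] tr_add[OF char_2]
      using tr_mult_power_two_power[OF card, of i x y] by simp
  qed
  have half: "tr t ((x + y) ^ (2 ^ t + 1))
      = tr t (x ^ (2 ^ t + 1)) + tr t (y ^ (2 ^ t + 1)) + tr ?n (x ^ (2 ^ t) * y)"
    unfolding char_2_power_two_power_plus_1_add[OF char_2] tr_add[OF char_2]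
      tr_half_cross_terms[OF card, symmetric]
    by (simp add: add.assoc)
  have "S (\<lambda>i. tr ?n (x ^ (2 ^ i) * y)) + S (\<lambda>i. tr ?n (x ^ (2 ^ (?n - i)) * y))
        + tr ?n (x ^ (2 ^ t) * y)
      = (\<Sum>j\<in>{1..?n-1}. tr ?n (x ^ (2 ^ j) * y))"
    unfolding S_def by (rule sum_split_at_middle[OF t])
  also have "\<dots> = tr ?n ((\<Sum>j\<in>{1..?n-1}. x ^ (2 ^ j)) * y)"
    by (simp add: tr_sum[OF char_2] sum_distrib_right)
  also have "\<dots> = tr ?n ((tr ?n x - x) * y)"
    by (subst sum_power_two_power_eq_tr_minus) (use t in auto)
  also have "\<dots> = tr ?n x * tr ?n y + tr ?n (x * y)"
    unfolding char_2_diff[OF char_2] distrib_right tr_add[OF char_2]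
    by (simp add: tr_mult_idempotent[OF tr_idempotent[OF card]])
  finally show ?thesis
    unfolding quad_tr_def full half S_def by (simp add: add_ac)
qed

lemma quad_tr_idempotent:
  assumes card: "CARD('k::{field,finite}) = 2 ^ (2 * t)"
  shows "(quad_tr t (z::'k)) ^ 2 = quad_tr t z"
proof -
  note char_2 = finite_field_char_2[OF card]
  have "(z ^ (2 ^ t + 1)) ^ (2 ^ t) = z ^ (2 ^ t * 2 ^ t) * z ^ (2 ^ t)"
    by (simp add: power_mult[symmetric] power_add algebra_simps)
  also have "2 ^ t * 2 ^ t = (2::nat) ^ (2 * t)"
    by (simp flip: power_add add: mult_2)
  finally have "(z ^ (2 ^ t + 1)) ^ (2 ^ t) = z ^ (2 ^ t + 1)"
    using finite_field_power_two_power[OF card, of z] by (simp add: power_add mult.commute)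
  then show ?thesis
    unfolding quad_tr_def char_2_power2_add[OF char_2] char_2_sum_power2[OF char_2]
    by (simp add: tr_idempotent[OF card] tr_power2_idempotent[OF char_2])
qed

section \<open>Self-dual bases and the weight\<close>

locale self_dual_field =
  fixes n :: nat and a :: "nat \<Rightarrow> 'a::{field,finite}"
  assumes card: "CARD('a) = 2 ^ n" and basis: "self_dual_basis n a"
begin

lemmas char_2 = finite_field_char_2[OF card]

lemma tr_basis_mult: "i < n \<Longrightarrow> j < n \<Longrightarrow> tr n (a i * a j) = (if i = j then 1 else 0)"
  using basis unfolding self_dual_basis_def by blast

lemma tr_basis: "k < n \<Longrightarrow> tr n (a k) = 1"
  using tr_power_two_power[OF card, of "a k" 1] tr_basis_mult[of k k] by (simp add: power2_eq_square)

text \<open>The \<open>2 ^ n\<close> subset sums of the basis are pairwise distinct, since the trace against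
  \<open>a j\<close> detects whether \<open>j\<close> occurs; so they exhaust the field.\<close>
lemma basis_expansion: "z = (\<Sum>k<n. tr n (a k * z) * a k)"
proof -
  define f where "f S = (\<Sum>k\<in>S. a k)" for S
  have tr_f: "tr n (a j * f S) = (if j \<in> S then 1 else 0)" if "S \<subseteq> {..<n}" "j < n" for S j
  proof -
    have "tr n (a j * f S) = (\<Sum>k\<in>S. tr n (a j * a k))"
      unfolding f_def sum_distrib_left tr_sum[OF char_2] ..
    also have "\<dots> = (\<Sum>k\<in>S. if j = k then 1 else 0)"
      using that by (intro sum.cong refl) (auto simp: tr_basis_mult)
    moreover have "finite S"
      using that(1) finite_subset by blast
    ultimately show ?thesis
      by simp
  qed
  have "inj_on f (Pow {..<n})"
  proof (rule inj_onI)
    fix S T assume S: "S \<in> Pow {..<n}" and T: "T \<in> Pow {..<n}" and "f S = f T"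
    then have "j \<in> S \<longleftrightarrow> j \<in> T" if "j < n" for j
      using tr_f[of S j] tr_f[of T j] that by (auto split: if_splits)
    then show "S = T"
      using S T by blast
  qed
  then have "card (f ` Pow {..<n}) = CARD('a)"
    using card by (simp add: card_image card_Pow)
  then have "z \<in> f ` Pow {..<n}"
    using card_subset_eq[of UNIV "f ` Pow {..<n}"] by auto
  then obtain S where S: "S \<subseteq> {..<n}" and z: "z = f S"
    by blast
  have "(\<Sum>k<n. tr n (a k * z) * a k) = (\<Sum>k<n. if k \<in> S then a k else 0)"
    unfolding z by (intro sum.cong refl) (simp add: tr_f[OF S])
  also have "\<dots> = z"
    using S by (simp add: sum.If_cases Int_absorb1 z f_def)
  finally show ?thesis ..
qed

lemma tr_mult_basis_expansion: "tr n (x * y) = (\<Sum>k<n. tr n (a k * x) * tr n (a k * y))"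
proof -
  have "x * y = (\<Sum>k<n. tr n (a k * y) * (a k * x))"
    by (subst basis_expansion[of y]) (simp add: sum_distrib_left mult_ac)
  then have "tr n (x * y) = (\<Sum>k<n. tr n (tr n (a k * y) * (a k * x)))"
    by (simp add: tr_sum[OF char_2])
  also have "\<dots> = (\<Sum>k<n. tr n (a k * x) * tr n (a k * y))"
    by (intro sum.cong refl) (subst tr_mult_idempotent[OF tr_idempotent[OF card]], simp add: mult.commute)
  finally show ?thesis .
qed

definition support :: "'a \<Rightarrow> nat set" where
  "support z = {i. i < n \<and> tr n (a i * z) \<noteq> 0}"

lemma finite_support [simp]: "finite (support z)"
  by (simp add: support_def)

lemma wt_eq_card_support: "wt n a z = card (support z)"
  by (simp add: wt_def support_def)

lemma support_add: "support (x + y) = (support x - support y) \<union> (support y - support x)"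
proof -
  have "tr n (a i * (x + y)) \<noteq> 0 \<longleftrightarrow> (tr n (a i * x) \<noteq> 0) \<noteq> (tr n (a i * y) \<noteq> 0)" for i
    using tr_cases[OF card, of "a i * x"] tr_cases[OF card, of "a i * y"] char_2
    by (auto simp: distrib_left tr_add)
  then show ?thesis
    unfolding support_def by auto
qed

lemma card_support_add:
  "card (support x) + card (support y) = card (support (x + y)) + 2 * card (support x \<inter> support y)"
proof -
  have "card (support x) = card (support x - support y) + card (support x \<inter> support y)"
    using card_Int_Diff[OF finite_support, of x "support y"] by linarith
  moreover have "card (support y) = card (support y - support x) + card (support x \<inter> support y)"
    using card_Int_Diff[OF finite_support, of y "support x"] by (simp add: Int_commute)
  moreover have "card (support (x + y)) = card (support x - support y) + card (support y - support x)"
    unfolding support_add by (intro card_Un_disjoint) auto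
  ultimately show ?thesis
    by simp
qed

lemma tr_mult_eq_card_support_inter: "tr n (x * y) = of_nat (card (support x \<inter> support y))"
proof -
  have "tr n (x * y) = (\<Sum>k<n. if k \<in> support x \<inter> support y then 1 else 0)"
    unfolding tr_mult_basis_expansion[of x y]
  proof (intro sum.cong refl)
    fix k assume "k \<in> {..<n}"
    then show "tr n (a k * x) * tr n (a k * y) = (if k \<in> support x \<inter> support y then 1 else 0)"
      using tr_cases[OF card, of "a k * x"] tr_cases[OF card, of "a k * y"] by (auto simp: support_def)
  qed
  also have "\<dots> = (\<Sum>k\<in>{..<n} \<inter> (support x \<inter> support y). 1)"
    by (rule sum.inter_restrict[symmetric]) simp
  also have "{..<n} \<inter> (support x \<inter> support y) = support x \<inter> support y"
    unfolding support_def by auto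
  finally show ?thesis
    by simp
qed

lemma chi_to_bit_of_nat: "chi (to_bit (of_nat d :: 'a)) = (-1) ^ d"
proof -
  have "(of_nat d :: 'a) = (if even d then 0 else 1)"
    by (induction d) (auto simp: char_2 mult_2[symmetric])
  then show ?thesis
    by (simp add: to_bit_def chi_def)
qed

lemma i_power_wt_add:
  "\<i> ^ wt n a (x + y) = \<i> ^ wt n a x * \<i> ^ wt n a y * chi (to_bit (tr n (x * y)))"
proof -
  define c where "c = card (support x \<inter> support y)"
  have "\<i> ^ wt n a x * \<i> ^ wt n a y = \<i> ^ wt n a (x + y) * (-1) ^ c"
    unfolding wt_eq_card_support c_def power_add[symmetric] card_support_add
    by (simp add: power_add power_mult)
  moreover have "chi (to_bit (tr n (x * y))) = (-1) ^ c"
    unfolding tr_mult_eq_card_support_inter c_def chi_to_bit_of_nat ..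
  moreover have "((-1::complex) ^ c) * (-1) ^ c = 1"
    by (simp add: power_mult_distrib[symmetric])
  ultimately show ?thesis
    by (simp add: mult.assoc)
qed

end

section \<open>Bent-negabent functions\<close>

lemma cmod_half_combination:
  fixes s S1 S2 :: complex
  assumes "S1 \<in> {s, - s}" and "S2 \<in> {s, - s}"
  shows "cmod ((1 + \<i>) / 2 * S1 + (1 - \<i>) / 2 * S2) = cmod s"
proof -
  have "(1 + \<i>) / 2 * S1 + (1 - \<i>) / 2 * S2 \<in> {s, \<i> * s, - \<i> * s, - s}"
    using assms by (auto simp: field_simps)
  then show ?thesis
    by (auto simp: norm_mult)
qed

locale even_self_dual_field = self_dual_field +
  fixes t :: nat
  assumes n_eq: "n = 2 * t"
begin

definition quad_sign :: "'a \<Rightarrow> complex" where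
  "quad_sign z = chi (to_bit (quad_tr t z))"

lemma card_even: "CARD('a) = 2 ^ (2 * t)"
  using card n_eq by simp

lemma quad_sign_0 [simp]: "quad_sign 0 = 1"
  by (simp add: quad_sign_def quad_tr_def zero_power to_bit_def chi_def)

lemma quad_sign_mult_self [simp]: "quad_sign z * quad_sign z = 1"
  by (simp add: quad_sign_def)

lemma quad_sign_add:
  "quad_sign (x + y)
    = quad_sign x * quad_sign y * chi (to_bit (tr n x * tr n y)) * chi (to_bit (tr n (x * y)))"
proof -
  have idem: "(quad_tr t x + quad_tr t y) ^ 2 = quad_tr t x + quad_tr t y"
    "(tr n x * tr n y) ^ 2 = tr n x * tr n y"
    "(quad_tr t x + quad_tr t y + tr n x * tr n y) ^ 2 = quad_tr t x + quad_tr t y + tr n x * tr n y"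
    by (simp_all add: char_2_power2_add[OF char_2] power_mult_distrib
        quad_tr_idempotent[OF card_even] tr_idempotent[OF card])
  show ?thesis
    unfolding quad_sign_def quad_tr_add[OF card_even] n_eq[symmetric]
    by (simp only: to_bit_add[OF char_2] idem quad_tr_idempotent[OF card_even]
        tr_idempotent[OF card] chi_add)
qed

text \<open>For the basis vectors \<open>a 0\<close> and \<open>a 1\<close> the correction term in \<open>quad_sign_add\<close> is \<open>-1\<close>.\<close>
lemma quad_sign_not_affine_char:
  fixes \<phi> :: "'b::monoid_add \<Rightarrow> 'a"
  assumes "surj \<phi>" and \<phi>_add: "\<And>u v. \<phi> (u + v) = \<phi> u + \<phi> v" and M: "additive_char M"
  shows "\<not> (\<forall>p. quad_sign (\<phi> p) = K * M p)"
proof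
  assume affine: "\<forall>p. quad_sign (\<phi> p) = K * M p"
  have "\<phi> 0 = 0"
    using \<phi>_add[of 0 0] by (metis add.right_neutral add_left_cancel)
  then have "K * M 0 = 1"
    using affine[rule_format, of 0] by simp
  moreover have "M 0 = M 0 * M 0"
    using M unfolding additive_char_def by (metis add_0)
  ultimately have "K = 1"
    by (metis mult_cancel_left1 mult.commute mult_zero_left zero_neq_one)
  have "quad_sign (x + y) = quad_sign x * quad_sign y" for x y
  proof -
    obtain p q where "x = \<phi> p" and "y = \<phi> q"
      using \<open>surj \<phi>\<close> by (metis surjD)
    then show ?thesis
      using affine M \<open>K = 1\<close> by (simp add: additive_char_def flip: \<phi>_add)
  qed
  moreover have "1 < n"
    using card_finite_field_ge_2[where 'k='a] card n_eq by (cases t) auto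
  then have "quad_sign (a 0 + a 1) = - (quad_sign (a 0) * quad_sign (a 1))"
    unfolding quad_sign_add using tr_basis[of 0] tr_basis[of 1] tr_basis_mult[of 0 1]
    by (simp add: to_bit_def chi_def)
  ultimately have "quad_sign (a 0) * quad_sign (a 1) = 0"
    by simp
  then show False
    by (metis mult_zero_left mult_zero_right quad_sign_mult_self zero_neq_one mult_eq_0_iff)
qed

definition i_tr :: "'a \<Rightarrow> complex" where
  "i_tr z = (if tr n z = 0 then 1 else \<i>)"

lemma i_tr_eq: "i_tr z = ((1 + \<i>) + (1 - \<i>) * tr_char n z) / 2"
  using tr_cases[OF card, of z] by (auto simp: i_tr_def tr_char_def to_bit_def chi_def field_simps)

lemma cnj_i_tr_add: "cnj (i_tr (x + y)) = cnj (i_tr x) * cnj (i_tr y) * chi (to_bit (tr n x * tr n y))"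
  using tr_cases[OF card, of x] tr_cases[OF card, of y] char_2
  by (auto simp: i_tr_def tr_add to_bit_def chi_def)

text \<open>The three \<open>(-1) ^ _\<close> correction terms of \<open>i ^ wt\<close>, \<open>quad_sign\<close> and \<open>i ^ Tr\<close> cancel
  in pairs, so this product is an additive character.\<close>
definition wt_char :: "'a \<Rightarrow> complex" where
  "wt_char z = \<i> ^ wt n a z * quad_sign z * cnj (i_tr z)"

lemma additive_char_wt_char: "additive_char wt_char"
  unfolding additive_char_def
proof (intro allI)
  fix x y
  have "wt_char (x + y) = wt_char x * wt_char y
      * (chi (to_bit (tr n (x * y))) * chi (to_bit (tr n (x * y))))
      * (chi (to_bit (tr n x * tr n y)) * chi (to_bit (tr n x * tr n y)))"
    unfolding wt_char_def i_power_wt_add quad_sign_add cnj_i_tr_add by (simp add: mult_ac)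
  then show "wt_char (x + y) = wt_char x * wt_char y"
    by simp
qed

lemma sign_valued_wt_char: "sign_valued wt_char"
  unfolding sign_valued_def
proof
  fix x
  have "wt_char (x + x) = wt_char x * wt_char x"
    using additive_char_wt_char unfolding additive_char_def by blast
  moreover have "wt_char (x + x) = 1"
    unfolding char_2_add_self[OF char_2] by (simp add: wt_char_def wt_def i_tr_def)
  ultimately show "wt_char x = 1 \<or> wt_char x = -1"
    by (metis power2_eq_square power2_eq_1_iff)
qed

lemma i_power_wt_eq: "\<i> ^ wt n a z = quad_sign z * wt_char z * i_tr z"
proof -
  have "quad_sign z * wt_char z * i_tr z
      = \<i> ^ wt n a z * (quad_sign z * quad_sign z) * (cnj (i_tr z) * i_tr z)"
    by (simp add: wt_char_def mult_ac)
  moreover have "cnj (i_tr z) * i_tr z = 1"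
    by (simp add: i_tr_def)
  ultimately show ?thesis
    by simp
qed

text \<open>Since \<open>\<i> ^ wt z = quad_sign z * wt_char z * i_tr z\<close> and \<open>i_tr\<close> is a combination of
  \<open>1\<close> and \<open>tr_char n\<close>, each nega-Hadamard coefficient is \<open>(1 + \<i>) / 2 * S1 + (1 - \<i>) / 2 * S2\<close>
  for two sums of the form assumed below.\<close>
lemma negabent_if_quad_twisted_sums:
  assumes "\<And>\<rho>. additive_char \<rho> \<Longrightarrow> sign_valued \<rho> \<Longrightarrow>
    (\<Sum>z\<in>UNIV. chi (g z) * quad_sign z * \<rho> z) \<in> {of_nat (2 ^ t), - of_nat (2 ^ t)}"
  shows "negabent n a g"
  unfolding negabent_def
proof
  fix \<mu> :: 'a
  define \<rho> where "\<rho> z = tr_char n (\<mu> * z) * wt_char z" for z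
  have "additive_char \<rho>" and "additive_char (\<lambda>z. \<rho> z * tr_char n z)"
    unfolding \<rho>_def using additive_char_wt_char
    by (intro additive_char_mult additive_char_tr_char_linear[OF card]; simp add: distrib_left)+
  moreover have "sign_valued \<rho>" and "sign_valued (\<lambda>z. \<rho> z * tr_char n z)"
    unfolding \<rho>_def using sign_valued_wt_char
    by (intro sign_valued_mult sign_valued_tr_char; simp)+
  ultimately have sums:
    "(\<Sum>z\<in>UNIV. chi (g z) * quad_sign z * \<rho> z) \<in> {of_nat (2 ^ t), - of_nat (2 ^ t)}"
    "(\<Sum>z\<in>UNIV. chi (g z) * quad_sign z * (\<rho> z * tr_char n z)) \<in> {of_nat (2 ^ t), - of_nat (2 ^ t)}"
    using assms by blast+
  have "chi (g z + to_bit (tr n (\<mu> * z))) * \<i> ^ wt n a z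
      = (1 + \<i>) / 2 * (chi (g z) * quad_sign z * \<rho> z)
        + (1 - \<i>) / 2 * (chi (g z) * quad_sign z * (\<rho> z * tr_char n z))" for z
  proof -
    have "chi (g z + to_bit (tr n (\<mu> * z))) * \<i> ^ wt n a z = chi (g z) * quad_sign z * \<rho> z * i_tr z"
      unfolding chi_add i_power_wt_eq \<rho>_def tr_char_def by (simp only: mult_ac)
    also have "\<dots> = (1 + \<i>) / 2 * (chi (g z) * quad_sign z * \<rho> z)
        + (1 - \<i>) / 2 * (chi (g z) * quad_sign z * (\<rho> z * tr_char n z))"
      unfolding i_tr_eq by (simp add: field_simps)
    finally show ?thesis .
  qed
  then have "(\<Sum>z\<in>UNIV. chi (g z + to_bit (tr n (\<mu> * z))) * \<i> ^ wt n a z)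
      = (1 + \<i>) / 2 * (\<Sum>z\<in>UNIV. chi (g z) * quad_sign z * \<rho> z)
        + (1 - \<i>) / 2 * (\<Sum>z\<in>UNIV. chi (g z) * quad_sign z * (\<rho> z * tr_char n z))"
    by (simp only: sum_distrib_left sum.distrib[symmetric])
  then have "cmod (\<Sum>z\<in>UNIV. chi (g z + to_bit (tr n (\<mu> * z))) * \<i> ^ wt n a z) = 2 ^ t"
    using cmod_half_combination[OF sums] by (simp del: of_nat_power)
  then show "cmod (\<Sum>z\<in>UNIV. chi (g z + to_bit (tr n (\<mu> * z))) * \<i> ^ wt n a z)
      = 2 powr (real n / 2)"
    using n_eq by (simp add: powr_realpow)
qed

text \<open>If \<open>\<alpha>1 * \<alpha>3 = 0\<close> the decomposition would make \<open>quad_sign \<circ> \<phi>\<close> affine.\<close>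
lemma quad_decomposition_nondegenerate:
  fixes \<phi> :: "'b::{field,finite} \<times> 'b \<Rightarrow> 'a"
  assumes card_b: "CARD('b) = 2 ^ t" and "surj \<phi>" and \<phi>_add: "\<And>u v. \<phi> (u + v) = \<phi> u + \<phi> v"
    and quad: "\<And>p. quad_sign (\<phi> p) = tr_char t ((\<alpha>1 * fst p + \<alpha>2) * (\<alpha>3 * snd p + \<alpha>4))
      * tr_char t (\<beta> * fst p) * tr_char t (\<gamma> * snd p) * chi c"
  shows "\<alpha>1 \<noteq> 0 \<and> \<alpha>3 \<noteq> 0"
proof (rule ccontr)
  assume "\<not> (\<alpha>1 \<noteq> 0 \<and> \<alpha>3 \<noteq> 0)"
  define M where "M p = tr_char t ((\<alpha>1 * \<alpha>4 + \<beta>) * fst p) * tr_char t ((\<alpha>2 * \<alpha>3 + \<gamma>) * snd p)"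
    for p :: "'b \<times> 'b"
  have "quad_sign (\<phi> p) = (tr_char t (\<alpha>2 * \<alpha>4) * chi c) * M p" for p
  proof -
    have "(\<alpha>1 * fst p + \<alpha>2) * (\<alpha>3 * snd p + \<alpha>4) + \<beta> * fst p + \<gamma> * snd p
        = \<alpha>2 * \<alpha>4 + (\<alpha>1 * \<alpha>4 + \<beta>) * fst p + (\<alpha>2 * \<alpha>3 + \<gamma>) * snd p"
      using \<open>\<not> (\<alpha>1 \<noteq> 0 \<and> \<alpha>3 \<noteq> 0)\<close> by (auto simp: algebra_simps)
    moreover have "quad_sign (\<phi> p)
        = tr_char t ((\<alpha>1 * fst p + \<alpha>2) * (\<alpha>3 * snd p + \<alpha>4) + \<beta> * fst p + \<gamma> * snd p) * chi c"
      unfolding quad by (simp only: tr_char_add[OF card_b])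
    ultimately show ?thesis
      unfolding M_def by (simp add: tr_char_add[OF card_b] mult_ac)
  qed
  moreover have "additive_char M"
    unfolding M_def
    by (intro additive_char_mult additive_char_tr_char_linear[OF card_b]) (simp_all add: distrib_left)
  ultimately show False
    using quad_sign_not_affine_char[OF \<open>surj \<phi>\<close> \<phi>_add] by blast
qed

lemma maiorana_mcfarland_bent:
  fixes \<phi> :: "'b::{field,finite} \<times> 'b \<Rightarrow> 'a" and P H :: "'b \<Rightarrow> 'b"
  assumes card_b: "CARD('b) = 2 ^ t" and "bij \<phi>" and \<phi>_add: "\<And>u v. \<phi> (u + v) = \<phi> u + \<phi> v"
    and "bij (\<lambda>y. P y + y)" and "\<alpha>1 \<noteq> 0" and "\<alpha>3 \<noteq> 0"
    and quad: "\<And>p. quad_sign (\<phi> p) = tr_char t ((\<alpha>1 * fst p + \<alpha>2) * (\<alpha>3 * snd p + \<alpha>4))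
      * tr_char t (\<beta> * fst p) * tr_char t (\<gamma> * snd p) * chi c"
    and g: "\<And>p. chi (g (\<phi> p)) = tr_char t ((\<alpha>1 * fst p + \<alpha>2) * P (\<alpha>3 * snd p + \<alpha>4))
      * tr_char t (H (\<alpha>3 * snd p + \<alpha>4)) * quad_sign (\<phi> p)"
  shows "bent n g"
  unfolding bent_def
proof
  fix \<mu> :: 'a
  define \<rho> where "\<rho> p = tr_char t (\<beta> * fst p) * tr_char t (\<gamma> * snd p) * tr_char n (\<mu> * \<phi> p)" for p
  have "additive_char \<rho>"
    unfolding \<rho>_def
    by (intro additive_char_mult additive_char_tr_char_linear[OF card_b]
        additive_char_tr_char_linear[OF card]) (simp_all add: distrib_left \<phi>_add)
  moreover have "sign_valued \<rho>"
    unfolding \<rho>_def by (intro sign_valued_mult sign_valued_tr_char)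
  ultimately have sum: "(\<Sum>p\<in>UNIV. tr_char t ((\<alpha>1 * fst p + \<alpha>2) * (P (\<alpha>3 * snd p + \<alpha>4) + (\<alpha>3 * snd p + \<alpha>4)))
      * tr_char t (H (\<alpha>3 * snd p + \<alpha>4)) * \<rho> p) \<in> {of_nat (2 ^ t), - of_nat (2 ^ t)}"
    using maiorana_mcfarland_sum_affine[OF card_b \<open>bij (\<lambda>y. P y + y)\<close> \<open>\<alpha>1 \<noteq> 0\<close> \<open>\<alpha>3 \<noteq> 0\<close>] card_b
    by simp
  have "chi (g (\<phi> p) + to_bit (tr n (\<mu> * \<phi> p))) = chi c *
      (tr_char t ((\<alpha>1 * fst p + \<alpha>2) * (P (\<alpha>3 * snd p + \<alpha>4) + (\<alpha>3 * snd p + \<alpha>4)))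
        * tr_char t (H (\<alpha>3 * snd p + \<alpha>4)) * \<rho> p)" for p
    unfolding chi_add tr_char_def[symmetric] g quad \<rho>_def distrib_left tr_char_add[OF card_b]
    by (simp only: mult_ac)
  then have "(\<Sum>z\<in>UNIV. chi (g z + to_bit (tr n (\<mu> * z)))) = chi c *
      (\<Sum>p\<in>UNIV. tr_char t ((\<alpha>1 * fst p + \<alpha>2) * (P (\<alpha>3 * snd p + \<alpha>4) + (\<alpha>3 * snd p + \<alpha>4)))
        * tr_char t (H (\<alpha>3 * snd p + \<alpha>4)) * \<rho> p)"
    unfolding sum_UNIV_reindex_bij[OF \<open>bij \<phi>\<close>, of "\<lambda>z. chi (g z + to_bit (tr n (\<mu> * z)))"]
    by (simp only: sum_distrib_left)
  then show "cmod (\<Sum>z\<in>UNIV. chi (g z + to_bit (tr n (\<mu> * z)))) = 2 powr (real n / 2)"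
    using sum chi_cases[of c] n_eq by (auto simp: norm_mult norm_power powr_realpow)
qed

lemma maiorana_mcfarland_negabent:
  fixes \<phi> :: "'b::{field,finite} \<times> 'b \<Rightarrow> 'a" and P H :: "'b \<Rightarrow> 'b"
  assumes card_b: "CARD('b) = 2 ^ t" and "bij \<phi>" and \<phi>_add: "\<And>u v. \<phi> (u + v) = \<phi> u + \<phi> v"
    and "bij P" and "\<alpha>1 \<noteq> 0" and "\<alpha>3 \<noteq> 0"
    and g: "\<And>p. chi (g (\<phi> p)) = tr_char t ((\<alpha>1 * fst p + \<alpha>2) * P (\<alpha>3 * snd p + \<alpha>4))
      * tr_char t (H (\<alpha>3 * snd p + \<alpha>4)) * quad_sign (\<phi> p)"
  shows "negabent n a g"
proof (rule negabent_if_quad_twisted_sums)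
  fix \<rho> :: "'a \<Rightarrow> complex"
  assume "additive_char \<rho>" and "sign_valued \<rho>"
  then have "additive_char (\<lambda>p. \<rho> (\<phi> p))" and "sign_valued (\<lambda>p. \<rho> (\<phi> p))"
    by (simp_all add: additive_char_comp \<phi>_add sign_valued_def)
  have "(\<Sum>z\<in>UNIV. chi (g z) * quad_sign z * \<rho> z) = (\<Sum>p\<in>UNIV. chi (g (\<phi> p)) * quad_sign (\<phi> p) * \<rho> (\<phi> p))"
    by (rule sum_UNIV_reindex_bij[OF \<open>bij \<phi>\<close>])
  also have "\<dots> = (\<Sum>p\<in>UNIV. tr_char t ((\<alpha>1 * fst p + \<alpha>2) * P (\<alpha>3 * snd p + \<alpha>4))
      * tr_char t (H (\<alpha>3 * snd p + \<alpha>4)) * \<rho> (\<phi> p))"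
    by (simp add: g mult.assoc)
  finally show "(\<Sum>z\<in>UNIV. chi (g z) * quad_sign z * \<rho> z) \<in> {of_nat (2 ^ t), - of_nat (2 ^ t)}"
    using maiorana_mcfarland_sum_affine[OF card_b \<open>bij P\<close> \<open>\<alpha>1 \<noteq> 0\<close> \<open>\<alpha>3 \<noteq> 0\<close>
        \<open>additive_char (\<lambda>p. \<rho> (\<phi> p))\<close> \<open>sign_valued (\<lambda>p. \<rho> (\<phi> p))\<close>] card_b
    by simp
qed

end

theorem theorem8:
  fixes t n :: nat
    and \<phi> :: "'b::{field,finite} \<times> 'b \<Rightarrow> 'a::{field,finite}"
    and a :: "nat \<Rightarrow> 'a"
    and \<alpha>1 \<alpha>2 \<alpha>3 \<alpha>4 \<beta> \<gamma> :: 'b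
    and c :: bit
    and \<pi> h :: "'b poly"
  assumes n_def: "n = 2 * t"
    and card_b: "CARD('b) = 2 ^ t"
    and card_a: "CARD('a) = 2 ^ n"
    and sdb: "self_dual_basis n a"
    and phi_bij: "bij \<phi>"
    and phi_add: "\<And>u v. \<phi> (u + v) = \<phi> u + \<phi> v"
    and decomp: "\<And>x y.
        to_bit ((\<Sum>i\<in>{1..t-1}. tr n ((\<phi> (x, y)) ^ (2 ^ i + 1)))
                + tr t ((\<phi> (x, y)) ^ (2 ^ t + 1)))
        = to_bit (tr t ((\<alpha>1 * x + \<alpha>2) * (\<alpha>3 * y + \<alpha>4)))
          + to_bit (tr t (\<beta> * x)) + to_bit (tr t (\<gamma> * y)) + c"
    and cm: "complete_mapping \<pi>"
  shows "bent_negabent n a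
           ((\<lambda>(x, y).
               to_bit (tr t ((\<alpha>1 * x + \<alpha>2) * poly \<pi> (\<alpha>3 * y + \<alpha>4)))
             + to_bit (tr t (poly h (\<alpha>3 * y + \<alpha>4)))
             + to_bit (tr t ((\<alpha>1 * x + \<alpha>2) * (\<alpha>3 * y + \<alpha>4)))
             + to_bit (tr t (\<beta> * x)) + to_bit (tr t (\<gamma> * y)) + c) \<circ> inv \<phi>)"
proof -
  interpret even_self_dual_field n a t
    using card_a sdb n_def by unfold_locales
  define F where "F = (\<lambda>(x, y).
               to_bit (tr t ((\<alpha>1 * x + \<alpha>2) * poly \<pi> (\<alpha>3 * y + \<alpha>4)))
             + to_bit (tr t (poly h (\<alpha>3 * y + \<alpha>4)))
             + to_bit (tr t ((\<alpha>1 * x + \<alpha>2) * (\<alpha>3 * y + \<alpha>4)))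
             + to_bit (tr t (\<beta> * x)) + to_bit (tr t (\<gamma> * y)) + c)"
  have quad: "quad_sign (\<phi> p) = tr_char t ((\<alpha>1 * fst p + \<alpha>2) * (\<alpha>3 * snd p + \<alpha>4))
      * tr_char t (\<beta> * fst p) * tr_char t (\<gamma> * snd p) * chi c" for p
    using arg_cong[OF decomp[of "fst p" "snd p", unfolded n_def], of chi]
    by (simp only: quad_sign_def quad_tr_def prod.collapse chi_add tr_char_def)
  have F: "chi ((F \<circ> inv \<phi>) (\<phi> p)) = tr_char t ((\<alpha>1 * fst p + \<alpha>2) * poly \<pi> (\<alpha>3 * snd p + \<alpha>4))
      * tr_char t (poly h (\<alpha>3 * snd p + \<alpha>4)) * quad_sign (\<phi> p)" for p
    unfolding o_apply inv_f_f[OF bij_is_inj[OF phi_bij]] F_def split_beta chi_add quad tr_char_def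
    by (simp only: mult_ac)
  have "\<alpha>1 \<noteq> 0" and "\<alpha>3 \<noteq> 0"
    using quad_decomposition_nondegenerate[OF card_b bij_is_surj[OF phi_bij] phi_add quad] by auto
  moreover have "bij (poly \<pi>)" and "bij (\<lambda>y. poly \<pi> y + y)"
    using cm by (simp_all add: complete_mapping_def)
  ultimately show ?thesis
    unfolding F_def[symmetric] bent_negabent_def
    using maiorana_mcfarland_bent[OF card_b phi_bij phi_add _ _ _ quad F]
      maiorana_mcfarland_negabent[OF card_b phi_bij phi_add _ _ _ F] by blast
qed

end
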